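(* Let $A \in \mathbb{Q}^{m\times n}$, $b \in \mathbb{Q}^m$, and $E = [c_1,d_1]\cup\cdots\cup[c_k,d_k]$ with $0 = c_1 < d_1 < c_2 < \cdots < c_k < d_k = 1$. Let $\sigma \in [k]^n$ be such that the box $\prod_{i=1}^n [c_{\sigma_i}, d_{\sigma_i}]$ is disjoint from $K_1 = \{x \in [0,1]^n : Ax \le b\}$. Let $K_2 = \{ p \in [0,1]^{n\times k} : \sum_{i,j} p_{ij} = 1,\ p_{ij} \ge 0,\ p_{i\sigma_i} = 0 \ \forall i\}$ and \[ f(x,p) = \sum_{i=1}^n \sum_{j=1}^k p_{ij}\left[(1-x_i)\frac{U_0(j)}{U_0(\sigma_i)} + x_i\frac{U_1(j)}{U_1(\sigma_i)}\right]. \] Then for every $x \in K_1$ there exists $p \in K_2$ with $f(x,p) \ge 1$.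
   Context: For $i \in [k]$, $U_0(i) = \prod_{j=1}^{i-1} \frac{1 - c_{j+1}}{1 - d_j}$ and $U_1(i) = \prod_{l=i}^{k-1} \frac{d_l}{c_{l+1}}$ (empty products equal $1$). *)

theory Defs
  imports "HOL-Analysis.Analysis"
begin

text \<open>Indices are 1-based: i in {1..n}, j in {1..k}, rows r in {1..m}.\<close>

definition U0 :: "(nat \<Rightarrow> real) \<Rightarrow> (nat \<Rightarrow> real) \<Rightarrow> nat \<Rightarrow> real" where
  "U0 c d i = (\<Prod>j\<in>{1..<i}. (1 - c (j+1)) / (1 - d j))"

definition U1 :: "(nat \<Rightarrow> real) \<Rightarrow> (nat \<Rightarrow> real) \<Rightarrow> nat \<Rightarrow> nat \<Rightarrow> real" where
  "U1 c d k i = (\<Prod>l\<in>{i..<k}. d l / c (l+1))"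

definition K1 :: "nat \<Rightarrow> nat \<Rightarrow> (nat \<Rightarrow> nat \<Rightarrow> real) \<Rightarrow> (nat \<Rightarrow> real) \<Rightarrow> (nat \<Rightarrow> real) set" where
  "K1 m n A b = {x. (\<forall>i\<in>{1..n}. 0 \<le> x i \<and> x i \<le> 1) \<and>
                    (\<forall>r\<in>{1..m}. (\<Sum>i=1..n. A r i * x i) \<le> b r)}"

definition K2 :: "nat \<Rightarrow> nat \<Rightarrow> (nat \<Rightarrow> nat) \<Rightarrow> (nat \<Rightarrow> nat \<Rightarrow> real) set" where
  "K2 n k \<sigma> = {p. (\<forall>i\<in>{1..n}. \<forall>j\<in>{1..k}. 0 \<le> p i j \<and> p i j \<le> 1) \<and>
                   (\<Sum>i=1..n. \<Sum>j=1..k. p i j) = 1 \<and>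
                   (\<forall>i\<in>{1..n}. p i (\<sigma> i) = 0)}"

definition fobj :: "nat \<Rightarrow> nat \<Rightarrow> (nat \<Rightarrow> real) \<Rightarrow> (nat \<Rightarrow> real) \<Rightarrow> (nat \<Rightarrow> nat)
    \<Rightarrow> (nat \<Rightarrow> real) \<Rightarrow> (nat \<Rightarrow> nat \<Rightarrow> real) \<Rightarrow> real" where
  "fobj n k c d \<sigma> x p = (\<Sum>i=1..n. \<Sum>j=1..k. p i j *
      ((1 - x i) * (U0 c d j / U0 c d (\<sigma> i)) + x i * (U1 c d k j / U1 c d k (\<sigma> i))))"

end

theory Submission
  imports Defs
begin

text \<open>If x \<in> K1 then some coordinate x_i leaves the interval [c_s, d_s], s = \<sigma>_i, and so lies in a
  gap next to it. Moving all mass to the neighbouring interval j = s \<plusminus> 1 on that side gives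
  f(x,p) = (1 - x_i) U0(j)/U0(s) + x_i U1(j)/U1(s). The two ratios are read off the recurrences
  of U0 and U1, and the resulting affine function of x_i equals 1 at the gap endpoint adjacent to
  interval s and grows into the gap.\<close>

lemma affine_gap_ge_one:
  fixes u v x :: real
  assumes "0 < v" "v < 1" "0 \<le> (v - x) * (v - u)"
  shows "1 \<le> (1 - x) * ((1 - u) / (1 - v)) + x * (u / v)"
proof -
  have "(1 - x) * ((1 - u) / (1 - v)) + x * (u / v) - 1 = (v - x) * (v - u) / ((1 - v) * v)"
    using assms(1,2) by (simp add: field_simps; simp add: algebra_simps)
  also have "\<dots> \<ge> 0"
    using assms by (intro divide_nonneg_pos) auto
  finally show ?thesis by simp
qed

definition point_mass :: "nat \<Rightarrow> nat \<Rightarrow> nat \<Rightarrow> nat \<Rightarrow> real" where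
  "point_mass i j = (\<lambda>i' j'. if i' = i \<and> j' = j then 1 else 0)"

lemma sum_sum_point_mass:
  assumes "i \<in> {1..n}" "j \<in> {1..k}"
  shows "(\<Sum>i'=1..n. \<Sum>j'=1..k. point_mass i j i' j' * g i' j') = g i j"
proof -
  have "point_mass i j i' j' * g i' j' = (if j' = j then if i' = i then g i j else 0 else 0)"
    for i' j'
    by (simp add: point_mass_def)
  then show ?thesis
    using assms by simp
qed

lemma point_mass_in_K2:
  assumes "i \<in> {1..n}" "j \<in> {1..k}" "j \<noteq> \<sigma> i"
  shows "point_mass i j \<in> K2 n k \<sigma>"
  using sum_sum_point_mass[OF assms(1,2), of "\<lambda>_ _. 1"] assms
  by (auto simp: K2_def point_mass_def)

lemma fobj_point_mass:
  assumes "i \<in> {1..n}" "j \<in> {1..k}"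
  shows "fobj n k c d \<sigma> x (point_mass i j)
    = (1 - x i) * (U0 c d j / U0 c d (\<sigma> i)) + x i * (U1 c d k j / U1 c d k (\<sigma> i))"
  unfolding fobj_def by (rule sum_sum_point_mass[OF assms])

lemma U0_Suc: "1 \<le> s \<Longrightarrow> U0 c d (Suc s) = U0 c d s * ((1 - c (Suc s)) / (1 - d s))"
  unfolding U0_def by (simp add: prod.atLeastLessThan_Suc)

lemma U1_Suc: "s < k \<Longrightarrow> U1 c d k s = d s / c (Suc s) * U1 c d k (Suc s)"
  unfolding U1_def by (simp add: prod.atLeast_Suc_lessThan)

locale interval_union =
  fixes k :: nat and c d :: "nat \<Rightarrow> real"
  assumes c1: "c 1 = 0"
    and cd: "\<forall>j\<in>{1..k}. c j < d j"
    and dc: "\<forall>j\<in>{1..<k}. d j < c (Suc j)"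
    and dk: "d k = 1"
begin

lemma endpoints_mono:
  assumes "1 \<le> j" "j \<le> l" "l \<le> k"
  shows "c j \<le> c l \<and> d j \<le> d l"
  using assms(2,3)
proof (induction l rule: dec_induct)
  case (step l)
  then have "c l < d l" "d l < c (Suc l)" "c (Suc l) < d (Suc l)"
    using cd dc assms(1) by auto
  with step show ?case by auto
qed simp

lemma c_nonneg: "1 \<le> j \<Longrightarrow> j \<le> k \<Longrightarrow> 0 \<le> c j"
  using endpoints_mono[of 1 j] c1 by auto

lemma d_le_one: "1 \<le> j \<Longrightarrow> j \<le> k \<Longrightarrow> d j \<le> 1"
  using endpoints_mono[of j k] dk by auto

lemma gap_bounds:
  assumes "1 \<le> t" "t < k"
  shows "0 < d t" "d t < c (Suc t)" "c (Suc t) < 1"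
proof -
  show "d t < c (Suc t)" using dc assms by auto
  moreover have "0 \<le> c t" "c t < d t" using c_nonneg cd assms by auto
  moreover have "c (Suc t) < d (Suc t)" "d (Suc t) \<le> 1" using cd d_le_one assms by auto
  ultimately show "0 < d t" "c (Suc t) < 1" by auto
qed

lemma U0_pos:
  assumes "s \<le> k"
  shows "0 < U0 c d s"
  unfolding U0_def
proof (rule prod_pos)
  fix t assume "t \<in> {1..<s}"
  with assms gap_bounds[of t] show "0 < (1 - c (t + 1)) / (1 - d t)"
    by auto
qed

lemma U1_pos:
  assumes "1 \<le> s"
  shows "0 < U1 c d k s"
  unfolding U1_def
proof (rule prod_pos)
  fix t assume "t \<in> {s..<k}"
  with assms gap_bounds[of t] show "0 < d t / c (t + 1)"
    by auto
qed

lemma U_ratios_across_gap: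
  assumes "1 \<le> t" "t < k"
  shows "U0 c d t / U0 c d (Suc t) = (1 - d t) / (1 - c (Suc t))"
    and "U1 c d k t / U1 c d k (Suc t) = d t / c (Suc t)"
    and "U0 c d (Suc t) / U0 c d t = (1 - c (Suc t)) / (1 - d t)"
    and "U1 c d k (Suc t) / U1 c d k t = c (Suc t) / d t"
proof -
  have pos: "0 < U0 c d t" "0 < U1 c d k (Suc t)" "0 < d t" "0 < c (Suc t)"
    "d t < 1" "c (Suc t) < 1"
    using U0_pos[of t] U1_pos[of "Suc t"] gap_bounds[OF assms] assms by auto
  show "U0 c d t / U0 c d (Suc t) = (1 - d t) / (1 - c (Suc t))"
    "U0 c d (Suc t) / U0 c d t = (1 - c (Suc t)) / (1 - d t)"
    using pos by (simp_all add: U0_Suc[OF assms(1)])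
  show "U1 c d k t / U1 c d k (Suc t) = d t / c (Suc t)"
    "U1 c d k (Suc t) / U1 c d k t = c (Suc t) / d t"
    using pos by (simp_all add: U1_Suc[OF assms(2)])
qed

lemma neighbour_ge_one:
  assumes s: "1 \<le> s" "s \<le> k" and y: "0 \<le> y" "y \<le> 1" "\<not> (c s \<le> y \<and> y \<le> d s)"
  shows "\<exists>j\<in>{1..k}. j \<noteq> s \<and>
    1 \<le> (1 - y) * (U0 c d j / U0 c d s) + y * (U1 c d k j / U1 c d k s)"
proof (cases "y < c s")
  case True
  then have "s \<noteq> 1" using c1 y(1) by auto
  with s(1) obtain t where t: "s = Suc t" "1 \<le> t"
    by (cases s) auto
  then have "t < k" using s by auto
  note gap = gap_bounds[OF t(2) this] U_ratios_across_gap[OF t(2) this]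
  have "1 \<le> (1 - y) * ((1 - d t) / (1 - c s)) + y * (d t / c s)"
    using gap True t by (intro affine_gap_ge_one) auto
  with gap \<open>t < k\<close> t show ?thesis by (intro bexI[of _ t]) auto
next
  case False
  then have "d s < y" using y by auto
  then have "s < k" using y(2) s(2) dk by (cases "s = k") auto
  note gap = gap_bounds[OF s(1) this] U_ratios_across_gap[OF s(1) this]
  have "1 \<le> (1 - y) * ((1 - c (Suc s)) / (1 - d s)) + y * (c (Suc s) / d s)"
    using gap \<open>d s < y\<close> by (intro affine_gap_ge_one) (auto intro!: mult_nonpos_nonpos)
  with gap \<open>s < k\<close> show ?thesis by (intro bexI[of _ "Suc s"]) auto
qed

end

theorem claim3p2:
  fixes m n k :: nat and A :: "nat \<Rightarrow> nat \<Rightarrow> real" and b c d :: "nat \<Rightarrow> real"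
    and \<sigma> :: "nat \<Rightarrow> nat"
  assumes A_rat: "\<forall>r\<in>{1..m}. \<forall>i\<in>{1..n}. A r i \<in> \<rat>"
    and b_rat: "\<forall>r\<in>{1..m}. b r \<in> \<rat>"
    and k_pos: "k \<ge> 1"
    and c1: "c 1 = 0"
    and cd: "\<forall>j\<in>{1..k}. c j < d j"
    and dc: "\<forall>j\<in>{1..<k}. d j < c (j+1)"
    and dk: "d k = 1"
    and \<sigma>_range: "\<forall>i\<in>{1..n}. \<sigma> i \<in> {1..k}"
    and disj: "\<forall>x\<in>K1 m n A b. \<not> (\<forall>i\<in>{1..n}. c (\<sigma> i) \<le> x i \<and> x i \<le> d (\<sigma> i))"
  shows "\<forall>x\<in>K1 m n A b. \<exists>p\<in>K2 n k \<sigma>. fobj n k c d \<sigma> x p \<ge> 1"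
proof
  fix x assume x: "x \<in> K1 m n A b"
  interpret interval_union k c d
    using c1 cd dc dk by unfold_locales auto
  obtain i where i: "i \<in> {1..n}" and outside: "\<not> (c (\<sigma> i) \<le> x i \<and> x i \<le> d (\<sigma> i))"
    using disj x by blast
  have "0 \<le> x i" "x i \<le> 1" using x i by (auto simp: K1_def)
  then obtain j where "j \<in> {1..k}" "j \<noteq> \<sigma> i"
    and "1 \<le> (1 - x i) * (U0 c d j / U0 c d (\<sigma> i)) + x i * (U1 c d k j / U1 c d k (\<sigma> i))"
    using neighbour_ge_one[of "\<sigma> i" "x i"] \<sigma>_range i outside by auto
  with i show "\<exists>p\<in>K2 n k \<sigma>. fobj n k c d \<sigma> x p \<ge> 1"
    by (intro bexI[of _ "point_mass i j"]) (simp_all add: fobj_point_mass point_mass_in_K2)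
qed

end
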